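(* Fix $b,c,d\in\mathbb C$ with $|c|<1$ and $|d|<1$. Define $f\colon\mathbb R^2\to\mathbb R$ by \[ f(x,y)=\Re\left[\frac{2(x+iy)\overline b+(x+iy)^2\overline d+\overline{b^2}c}{1-c\overline d}-\frac{|x+iy|^2+(x+iy)^2\overline c}{1-|c|^2}-\frac{|b|^2+\overline{b^2}d}{1-|d|^2}\right]. \] Then $f$ has a unique critical point $(x_0,y_0)$, which satisfies \[ x_0+iy_0=\frac{\overline b(d-c)+b(1-c\overline d)}{1-|d|^2}, \] and $\sup_{(x,y)\in\mathbb R^2}f(x,y)=f(x_0,y_0)=0$. *)

theory Defs
  imports "HOL-Analysis.Analysis"
begin

definition f5p4 :: "complex \<Rightarrow> complex \<Rightarrow> complex \<Rightarrow> real \<times> real \<Rightarrow> real" where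
  "f5p4 b c d p = (let z = Complex (fst p) (snd p) in
     Re ((2 * z * cnj b + z^2 * cnj d + cnj (b^2) * c) / (1 - c * cnj d)
         - (complex_of_real ((cmod z)^2) + z^2 * cnj c) / complex_of_real (1 - (cmod c)^2)
         - (complex_of_real ((cmod b)^2) + cnj (b^2) * d) / complex_of_real (1 - (cmod d)^2)))"

definition critical_point :: "(real \<times> real \<Rightarrow> real) \<Rightarrow> real \<times> real \<Rightarrow> bool" where
  "critical_point g p \<longleftrightarrow> (g has_derivative (\<lambda>_. 0)) (at p)"

end

theory Submission
  imports Defs
begin

text \<open>Completing the square, f(z) = Re (a (z - z0)^2) - |z - z0|^2 / (1 - |c|^2) with
  a = (conj d - conj c) / ((1 - c conj d) (1 - |c|^2)). The identity
  |1 - c conj d|^2 - |d - c|^2 = (1 - |c|^2)(1 - |d|^2) gives |a| < 1 / (1 - |c|^2), so this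
  quadratic form in z - z0 is negative definite: z0 is its unique critical point and its
  strict maximum, where it vanishes.\<close>

definition quad_form :: "complex \<Rightarrow> real \<Rightarrow> complex \<Rightarrow> real" where
  "quad_form a K w = Re (a * w^2) - K * (cmod w)^2"

lemma quad_form_0 [simp]: "quad_form a K 0 = 0"
  by (simp add: quad_form_def)

lemma quad_form_neg:
  assumes "cmod a < K" and "w \<noteq> 0"
  shows "quad_form a K w < 0"
proof -
  have "Re (a * w^2) \<le> cmod a * (cmod w)^2"
    by (metis complex_Re_le_cmod norm_mult norm_power)
  also have "\<dots> < K * (cmod w)^2"
    using assms by (intro mult_strict_right_mono) auto
  finally show ?thesis
    by (simp add: quad_form_def)
qed

lemma quad_form_nonpos: "cmod a < K \<Longrightarrow> quad_form a K w \<le> 0"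
  using quad_form_neg[of a K w] by (cases "w = 0") auto

lemma has_derivative_quad_form:
  fixes p :: "real \<times> real" and z0 :: complex
  defines "w \<equiv> Complex (fst p) (snd p) - z0"
  shows "((\<lambda>q. quad_form a K (Complex (fst q) (snd q) - z0)) has_derivative
           (\<lambda>h. 2 * Re ((a * w - K * cnj w) * Complex (fst h) (snd h)))) (at p)"
  unfolding quad_form_def cmod_power2 w_def Complex_eq
  by (rule has_derivative_eq_rhs, (rule derivative_intros)+) (simp add: algebra_simps power2_eq_square)

lemma critical_point_quad_form_iff:
  assumes "cmod a < K"
  shows "critical_point (\<lambda>q. quad_form a K (Complex (fst q) (snd q) - z0)) p
           \<longleftrightarrow> p = (Re z0, Im z0)"
proof -
  define w where "w = Complex (fst p) (snd p) - z0"
  define D where "D = (\<lambda>h::real \<times> real. 2 * Re ((a * w - K * cnj w) * Complex (fst h) (snd h)))"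
  have "((\<lambda>q. quad_form a K (Complex (fst q) (snd q) - z0)) has_derivative D) (at p)"
    unfolding D_def w_def by (rule has_derivative_quad_form)
  then have "critical_point (\<lambda>q. quad_form a K (Complex (fst q) (snd q) - z0)) p \<longleftrightarrow> D = (\<lambda>_. 0)"
    unfolding critical_point_def by (auto dest: has_derivative_unique)
  also have "\<dots> \<longleftrightarrow> w = 0"
  proof
    assume "D = (\<lambda>_. 0)"
    \<comment> \<open>Euler's identity: in the direction w the derivative is twice the form.\<close>
    moreover have "D (Re w, Im w) = 2 * quad_form a K w"
      unfolding D_def quad_form_def cmod_power2 by (simp add: power2_eq_square algebra_simps)
    ultimately have "quad_form a K w = 0"
      by simp
    then show "w = 0"
      using quad_form_neg[OF assms, of w] by force
  qed (simp add: D_def)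
  also have "\<dots> \<longleftrightarrow> p = (Re z0, Im z0)"
    unfolding w_def by (cases p) (auto simp: complex_eq_iff)
  finally show ?thesis .
qed

lemma of_real_quad_form:
  "complex_of_real (2 * quad_form a K w) = a * w^2 + cnj (a * w^2) - 2 * of_real K * w * cnj w"
  unfolding quad_form_def cmod_power2 by (simp add: complex_eq_iff power2_eq_square algebra_simps)

lemma cmod_1_minus_mult_cnj_squared:
  fixes c d :: complex
  shows "(cmod (1 - c * cnj d))^2 - (cmod (d - c))^2 = (1 - (cmod c)^2) * (1 - (cmod d)^2)"
proof -
  have "complex_of_real ((cmod (1 - c * cnj d))^2 - (cmod (d - c))^2)
      = complex_of_real ((1 - (cmod c)^2) * (1 - (cmod d)^2))"
    unfolding of_real_diff of_real_mult of_real_1 complex_norm_square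
      complex_cnj_diff complex_cnj_mult complex_cnj_cnj complex_cnj_one
    by algebra
  then show ?thesis
    using of_real_eq_iff by blast
qed

lemma one_minus_mult_cnj_nonzero:
  fixes c d :: complex
  assumes "cmod c < 1" and "cmod d < 1"
  shows "1 - c * cnj d \<noteq> 0"
proof -
  have "cmod c * cmod d \<le> cmod c"
    using assms(2) by (simp add: mult_left_le)
  then have "cmod (c * cnj d) \<noteq> 1"
    using assms(1) by (simp add: norm_mult)
  then show ?thesis
    by auto
qed

lemma cmod_diff_less_cmod_1_minus_mult_cnj:
  fixes c d :: complex
  assumes "cmod c < 1" and "cmod d < 1"
  shows "cmod (d - c) < cmod (1 - c * cnj d)"
proof -
  have "(cmod c)^2 < 1" and "(cmod d)^2 < 1"
    using assms by (simp_all add: abs_square_less_1)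
  then have "0 < (1 - (cmod c)^2) * (1 - (cmod d)^2)"
    by simp
  then have "(cmod (d - c))^2 < (cmod (1 - c * cnj d))^2"
    using cmod_1_minus_mult_cnj_squared[of c d] by linarith
  then show ?thesis
    by (rule power2_less_imp_less) simp
qed

lemma cmod_coefficient_less:
  fixes c d :: complex
  assumes "cmod c < 1" and "cmod d < 1"
  shows "cmod ((cnj d - cnj c) / ((1 - c * cnj d) * complex_of_real (1 - (cmod c)^2)))
           < 1 / (1 - (cmod c)^2)"
proof -
  have Dc: "0 < 1 - (cmod c)^2"
    using assms by (simp add: abs_square_less_1)
  have less: "cmod (d - c) < cmod (1 - c * cnj d)"
    using cmod_diff_less_cmod_1_minus_mult_cnj[OF assms] .
  have "cmod ((cnj d - cnj c) / ((1 - c * cnj d) * complex_of_real (1 - (cmod c)^2)))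
      = cmod (d - c) / (cmod (1 - c * cnj d) * (1 - (cmod c)^2))"
    unfolding norm_divide norm_mult complex_cnj_diff[symmetric] complex_mod_cnj norm_of_real
    using Dc by simp
  also have "\<dots> < 1 / (1 - (cmod c)^2)"
    using less Dc by (simp add: divide_simps)
  finally show ?thesis .
qed

text \<open>The real part Re E is recovered from E + cnj E; writing the conjugates zb, bb, cb, db as
  independent variables turns this into a rational identity, checked by clearing denominators.\<close>

lemma f5p4_add_cnj_identity:
  fixes z zb b bb c cb d db :: complex
  assumes "1 - c*db \<noteq> 0" and "1 - cb*d \<noteq> 0" and "1 - c*cb \<noteq> 0" and "1 - d*db \<noteq> 0"
  shows "((2*z*bb+z^2*db+bb^2*c)/(1-c*db)-(z*zb+z^2*cb)/(1-c*cb)-(b*bb+bb^2*d)/(1-d*db))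
   + ((2*zb*b+zb^2*d+b^2*cb)/(1-cb*d)-(z*zb+zb^2*c)/(1-c*cb)-(b*bb+b^2*db)/(1-d*db))
   = (db-cb)/((1-c*db)*(1-c*cb)) * (z - (bb*(d-c)+b*(1-c*db))/(1-d*db))^2
   + (d-c)/((1-cb*d)*(1-c*cb)) * (zb - (b*(db-cb)+bb*(1-cb*d))/(1-d*db))^2
   - 2*(z - (bb*(d-c)+b*(1-c*db))/(1-d*db))*(zb - (b*(db-cb)+bb*(1-cb*d))/(1-d*db))/(1-c*cb)"
proof -
  have "inverse (1 - c*db) * (1 - c*db) = 1" "inverse (1 - cb*d) * (1 - cb*d) = 1"
       "inverse (1 - c*cb) * (1 - c*cb) = 1" "inverse (1 - d*db) * (1 - d*db) = 1"
    using assms by simp_all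
  then show ?thesis unfolding divide_inverse inverse_mult_distrib by algebra
qed

lemma f5p4_eq_quad_form:
  fixes b c d :: complex
  assumes "cmod c < 1" and "cmod d < 1"
  shows "f5p4 b c d p =
           quad_form ((cnj d - cnj c) / ((1 - c * cnj d) * complex_of_real (1 - (cmod c)^2)))
             (1 / (1 - (cmod c)^2))
             (Complex (fst p) (snd p)
                - (cnj b * (d - c) + b * (1 - c * cnj d)) / complex_of_real (1 - (cmod d)^2))"
    (is "_ = quad_form ?a ?K ?w")
proof -
  let ?z = "Complex (fst p) (snd p)"
  have nonzero: "1 - c * cnj d \<noteq> 0" "1 - cnj c * d \<noteq> 0" "1 - c * cnj c \<noteq> 0" "1 - d * cnj d \<noteq> 0"
    using one_minus_mult_cnj_nonzero[of c d] one_minus_mult_cnj_nonzero[of d c]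
      one_minus_mult_cnj_nonzero[of c c] one_minus_mult_cnj_nonzero[of d d] assms
    by (auto simp: mult.commute)
  have Dc: "complex_of_real (1 - (cmod c)^2) = 1 - c * cnj c"
    and Dd: "complex_of_real (1 - (cmod d)^2) = 1 - d * cnj d"
    by (simp_all only: of_real_diff of_real_1 complex_norm_square)
  have "complex_of_real (2 * f5p4 b c d p) =
      ((2*?z*cnj b+?z^2*cnj d+cnj b^2*c)/(1-c*cnj d)-(?z*cnj ?z+?z^2*cnj c)/(1-c*cnj c)-(b*cnj b+cnj b^2*d)/(1-d*cnj d))
   + ((2*cnj ?z*b+cnj ?z^2*d+b^2*cnj c)/(1-cnj c*d)-(?z*cnj ?z+cnj ?z^2*c)/(1-c*cnj c)-(b*cnj b+b^2*cnj d)/(1-d*cnj d))"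
    unfolding f5p4_def Let_def complex_add_cnj[symmetric] Dc Dd
    by (simp add: complex_norm_square[unfolded of_real_power] mult.commute)
  also have "\<dots> = (cnj d-cnj c)/((1-c*cnj d)*(1-c*cnj c)) * (?z - (cnj b*(d-c)+b*(1-c*cnj d))/(1-d*cnj d))^2
   + (d-c)/((1-cnj c*d)*(1-c*cnj c)) * (cnj ?z - (b*(cnj d-cnj c)+cnj b*(1-cnj c*d))/(1-d*cnj d))^2
   - 2*(?z - (cnj b*(d-c)+b*(1-c*cnj d))/(1-d*cnj d))*(cnj ?z - (b*(cnj d-cnj c)+cnj b*(1-cnj c*d))/(1-d*cnj d))/(1-c*cnj c)"
    by (rule f5p4_add_cnj_identity[OF nonzero])
  also have "\<dots> = complex_of_real (2 * quad_form ?a ?K ?w)"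
    unfolding of_real_quad_form Dc Dd
    by (simp add: complex_norm_square[unfolded of_real_power] mult.commute mult.left_commute)
  finally show ?thesis
    by simp
qed

theorem lemma5p4:
  fixes b c d :: complex
  assumes "cmod c < 1" and "cmod d < 1"
  shows "\<exists>x0 y0.
           (\<forall>p. critical_point (f5p4 b c d) p \<longleftrightarrow> p = (x0, y0)) \<and>
           Complex x0 y0 = (cnj b * (d - c) + b * (1 - c * cnj d)) / complex_of_real (1 - (cmod d)^2) \<and>
           (\<forall>p. f5p4 b c d p \<le> f5p4 b c d (x0, y0)) \<and>
           (SUP p. f5p4 b c d p) = f5p4 b c d (x0, y0) \<and>
           f5p4 b c d (x0, y0) = 0"
proof -
  define z0 where "z0 = (cnj b * (d - c) + b * (1 - c * cnj d)) / complex_of_real (1 - (cmod d)^2)"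
  define a where "a = (cnj d - cnj c) / ((1 - c * cnj d) * complex_of_real (1 - (cmod c)^2))"
  define K where "K = 1 / (1 - (cmod c)^2)"
  have f: "f5p4 b c d = (\<lambda>p. quad_form a K (Complex (fst p) (snd p) - z0))"
    using f5p4_eq_quad_form[OF assms] unfolding a_def K_def z0_def by blast
  have "cmod a < K"
    using cmod_coefficient_less[OF assms] unfolding a_def K_def .
  then have crit: "critical_point (f5p4 b c d) p \<longleftrightarrow> p = (Re z0, Im z0)"
    and le: "f5p4 b c d p \<le> f5p4 b c d (Re z0, Im z0)"
    and zero: "f5p4 b c d (Re z0, Im z0) = 0" for p
    unfolding f by (simp_all add: critical_point_quad_form_iff quad_form_nonpos)
  have "(SUP p. f5p4 b c d p) = f5p4 b c d (Re z0, Im z0)"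
    by (rule cSup_eq_maximum) (use le in auto)
  with crit le zero show ?thesis
    unfolding z0_def[symmetric] by (intro exI[of _ "Re z0"] exI[of _ "Im z0"]) simp
qed

end
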